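(* The logics $\mathrm{E4}$, $\mathrm{S04}$ and $\mathrm{EMC4}$ have the finite model property, i.e. for each of them there is a class of finite neighborhood frames such that the theorems of the logic are exactly the formulas valid on all frames of that class.
   Context: Modal formulas are built from a countable set $Var$ of propositional variables using $\neg$, $\wedge$ and the unary operator $\Box$. A (modal) logic is a set of formulas containing all classical tautologies and closed under modus ponens, uniform substitution, and the rule (RE): from $\varphi\leftrightarrow\psi$ infer $\Box\varphi\leftrightarrow\Box\psi$. $\mathrm{E}$ is the smallest logic; $\mathrm{L}+\Gamma$ is the smallest logic containing $\mathrm{L}\cup\Gamma$. Axioms: $(4)\ \Box p\to\Box\Box p$; $(\mathrm{T})\ \Box p\to p$; $(\mathrm{M})\ \Box(p\wedge q)\to(\Box p\wedge\Box q)$; $(\mathrm{C})\ (\Box p\wedge\Box q)\to\Box(p\wedge q)$. $\mathrm{E4}=\mathrm{E}+4$, $\mathrm{EMC4}=\mathrm{E4}+\mathrm{M}+\mathrm{C}$, $\mathrm{S04}=\mathrm{E4}+\mathrm{T}+\mathrm{M}$. A neighborhood frame is a pair $(W,\bm{\Box})$ with $W\neq\varnothing$ and $\bm{\Box}:\mathcal P(W)\to\mathcal P(W)$; it is finite if $W$ is finite. A model on it adds a valuation $V:Var\to\mathcal P(W)$. Truth sets: $|p|_M=V(p)$, $|\neg\varphi|_M=W\setminus|\varphi|_M$, $|\varphi\wedge\psi|_M=|\varphi|_M\cap|\psi|_M$, $|\Box\varphi|_M=\bm{\Box}|\varphi|_M$. $\varphi$ is valid on a frame if $|\varphi|_M=W$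 for every model $M$ on it. *)

theory Defs
  imports Main
begin

datatype fm = Var nat | Neg fm | Conj fm fm | Box fm

definition Imp :: "fm \<Rightarrow> fm \<Rightarrow> fm" where
  "Imp a b = Neg (Conj a (Neg b))"

definition Iff :: "fm \<Rightarrow> fm \<Rightarrow> fm" where
  "Iff a b = Conj (Imp a b) (Imp b a)"

fun peval :: "(fm \<Rightarrow> bool) \<Rightarrow> fm \<Rightarrow> bool" where
  "peval v (Var n) = v (Var n)"
| "peval v (Neg a) = (\<not> peval v a)"
| "peval v (Conj a b) = (peval v a \<and> peval v b)"
| "peval v (Box a) = v (Box a)"

definition tautology :: "fm \<Rightarrow> bool" where
  "tautology a = (\<forall>v. peval v a)"

fun subst :: "(nat \<Rightarrow> fm) \<Rightarrow> fm \<Rightarrow> fm" where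
  "subst s (Var n) = s n"
| "subst s (Neg a) = Neg (subst s a)"
| "subst s (Conj a b) = Conj (subst s a) (subst s b)"
| "subst s (Box a) = Box (subst s a)"

definition is_logic :: "fm set \<Rightarrow> bool" where
  "is_logic L \<longleftrightarrow>
     (\<forall>a. tautology a \<longrightarrow> a \<in> L)
   \<and> (\<forall>a b. a \<in> L \<longrightarrow> Imp a b \<in> L \<longrightarrow> b \<in> L)
   \<and> (\<forall>a s. a \<in> L \<longrightarrow> subst s a \<in> L)
   \<and> (\<forall>a b. Iff a b \<in> L \<longrightarrow> Iff (Box a) (Box b) \<in> L)"

definition lplus :: "fm set \<Rightarrow> fm set \<Rightarrow> fm set" where
  "lplus L \<Gamma> = \<Inter>{L'. is_logic L' \<and> L \<union> \<Gamma> \<subseteq> L'}"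

definition ax4 :: fm where "ax4 = Imp (Box (Var 0)) (Box (Box (Var 0)))"
definition axT :: fm where "axT = Imp (Box (Var 0)) (Var 0)"
definition axM :: fm where
  "axM = Imp (Box (Conj (Var 0) (Var 1))) (Conj (Box (Var 0)) (Box (Var 1)))"
definition axC :: fm where
  "axC = Imp (Conj (Box (Var 0)) (Box (Var 1))) (Box (Conj (Var 0) (Var 1)))"

definition E :: "fm set" where "E = lplus {} {}"
definition E4 :: "fm set" where "E4 = lplus E {ax4}"
definition EMC4 :: "fm set" where "EMC4 = lplus E4 {axM, axC}"
definition S04 :: "fm set" where "S04 = lplus E4 {axT, axM}"

type_synonym frame = "nat set \<times> (nat set \<Rightarrow> nat set)"

definition is_frame :: "frame \<Rightarrow> bool" where
  "is_frame F \<longleftrightarrow> fst F \<noteq> {} \<and> (\<forall>X. X \<subseteq> fst F \<longrightarrow> snd F X \<subseteq> fst F)"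

definition finite_frame :: "frame \<Rightarrow> bool" where
  "finite_frame F \<longleftrightarrow> is_frame F \<and> finite (fst F)"

fun tset :: "frame \<Rightarrow> (nat \<Rightarrow> nat set) \<Rightarrow> fm \<Rightarrow> nat set" where
  "tset F V (Var p) = V p"
| "tset F V (Neg a) = fst F - tset F V a"
| "tset F V (Conj a b) = tset F V a \<inter> tset F V b"
| "tset F V (Box a) = snd F (tset F V a)"

definition valid :: "frame \<Rightarrow> fm \<Rightarrow> bool" where
  "valid F a \<longleftrightarrow> (\<forall>V. (\<forall>p. V p \<subseteq> fst F) \<longrightarrow> tset F V a = fst F)"

definition has_fmp :: "fm set \<Rightarrow> bool" where
  "has_fmp L \<longleftrightarrow> (\<exists>C. (\<forall>F\<in>C. finite_frame F) \<and> (\<forall>a. a \<in> L \<longleftrightarrow> (\<forall>F\<in>C. valid F a)))"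

end

theory Submission
  imports Defs
begin

(* A filtration through a finite canonical model. Given a non-theorem a of L, let At be the
   atoms (variables and boxed formulas) of the subformulas of a. Worlds are the subsets S of At
   whose characteristic conjunction is L-consistent; there are finitely many, and a formula
   over At is a theorem of L iff it holds in every world. Any neighborhood function with
   B |d| = |Box d| for the boxed subformulas Box d of a then refutes a, so it only remains to
   choose one whose frame validates the axioms: for E4 send |d| to |Box d| and fix all other
   sets; for S04 take the union of the sets |Box d| contained in X; for EMC4 the union of the
   sets |Box d1 & ... & Box dn| with |(d1 & Box d1) & ... & (dn & Box dn)| contained in X. *)

section \<open>Neighborhood semantics over arbitrary worlds\<close>

text \<open>The canonical worlds below are sets of formulas, so truth sets are defined for worlds of any
  type; \<open>finite_frame_equivalent\<close> transports finite frames to the frames over \<open>nat\<close> of \<open>Defs\<close>.\<close>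

fun truth_set :: "'a set \<Rightarrow> ('a set \<Rightarrow> 'a set) \<Rightarrow> (nat \<Rightarrow> 'a set) \<Rightarrow> fm \<Rightarrow> 'a set" where
  "truth_set W B V (Var p) = V p"
| "truth_set W B V (Neg a) = W - truth_set W B V a"
| "truth_set W B V (Conj a b) = truth_set W B V a \<inter> truth_set W B V b"
| "truth_set W B V (Box a) = B (truth_set W B V a)"

definition valid_in :: "'a set \<Rightarrow> ('a set \<Rightarrow> 'a set) \<Rightarrow> fm \<Rightarrow> bool" where
  "valid_in W B a \<longleftrightarrow> (\<forall>V. (\<forall>p. V p \<subseteq> W) \<longrightarrow> truth_set W B V a = W)"

lemma truth_set_subset:
  "\<forall>X\<subseteq>W. B X \<subseteq> W \<Longrightarrow> \<forall>p. V p \<subseteq> W \<Longrightarrow> truth_set W B V a \<subseteq> W"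
  by (induction a) auto

lemma truth_set_Imp: "truth_set W B V (Imp a b) = W - (truth_set W B V a - truth_set W B V b)"
  by (auto simp: Imp_def)

lemma truth_set_Iff:
  "truth_set W B V (Iff a b) = W - (truth_set W B V a - truth_set W B V b)
                                 - (truth_set W B V b - truth_set W B V a)"
  by (auto simp: Iff_def truth_set_Imp)

lemma truth_set_subst: "truth_set W B V (subst s a) = truth_set W B (\<lambda>n. truth_set W B V (s n)) a"
  by (induction a) auto

lemma peval_truth_set:
  assumes "\<forall>X\<subseteq>W. B X \<subseteq> W" "\<forall>p. V p \<subseteq> W" "w \<in> W"
  shows "peval (\<lambda>x. w \<in> truth_set W B V x) a \<longleftrightarrow> w \<in> truth_set W B V a"
  using assms by (induction a) auto

lemma tset_eq_truth_set: "tset F V a = truth_set (fst F) (snd F) V a"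
  by (induction a) auto

lemma valid_iff_valid_in: "valid F a \<longleftrightarrow> valid_in (fst F) (snd F) a"
  by (simp add: valid_def valid_in_def tset_eq_truth_set)

lemma valid_inI: "(\<And>V :: nat \<Rightarrow> 'a set. \<forall>p. V p \<subseteq> W \<Longrightarrow> truth_set W B V a = W) \<Longrightarrow> valid_in W B a"
  unfolding valid_in_def by blast

lemma valid_inD: "valid_in W B a \<Longrightarrow> \<forall>p. V p \<subseteq> W \<Longrightarrow> truth_set W B (V :: nat \<Rightarrow> _) a = W"
  unfolding valid_in_def by blast

lemma is_logic_valid_in:
  assumes closed: "\<forall>X\<subseteq>W. B X \<subseteq> W"
  shows "is_logic {a. valid_in W B a}"
  unfolding is_logic_def mem_Collect_eq
proof (intro conjI allI impI)
  fix a assume "tautology a"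
  show "valid_in W B a"
  proof (rule valid_inI)
    fix V :: "nat \<Rightarrow> 'a set" assume V: "\<forall>p. V p \<subseteq> W"
    have "w \<in> truth_set W B V a" if "w \<in> W" for w
      using peval_truth_set[OF closed V that] \<open>tautology a\<close> unfolding tautology_def by blast
    with truth_set_subset[OF closed V] show "truth_set W B V a = W" by blast
  qed
next
  fix a b assume "valid_in W B a" "valid_in W B (Imp a b)"
  show "valid_in W B b"
  proof (rule valid_inI)
    fix V :: "nat \<Rightarrow> 'a set" assume V: "\<forall>p. V p \<subseteq> W"
    have "truth_set W B V a = W" "W - (truth_set W B V a - truth_set W B V b) = W"
      using valid_inD[OF \<open>valid_in W B a\<close> V] valid_inD[OF \<open>valid_in W B (Imp a b)\<close> V]
      by (simp_all add: truth_set_Imp)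
    with truth_set_subset[OF closed V, of b] show "truth_set W B V b = W" by blast
  qed
next
  fix a s assume "valid_in W B a"
  show "valid_in W B (subst s a)"
  proof (rule valid_inI)
    fix V :: "nat \<Rightarrow> 'a set" assume V: "\<forall>p. V p \<subseteq> W"
    have "\<forall>p. truth_set W B V (s p) \<subseteq> W"
      using truth_set_subset[OF closed V] by blast
    then show "truth_set W B V (subst s a) = W"
      unfolding truth_set_subst by (rule valid_inD[OF \<open>valid_in W B a\<close>])
  qed
next
  fix a b assume "valid_in W B (Iff a b)"
  show "valid_in W B (Iff (Box a) (Box b))"
  proof (rule valid_inI)
    fix V :: "nat \<Rightarrow> 'a set" assume V: "\<forall>p. V p \<subseteq> W"
    have "W - (truth_set W B V a - truth_set W B V b) - (truth_set W B V b - truth_set W B V a) = W"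
      using valid_inD[OF \<open>valid_in W B (Iff a b)\<close> V] by (simp add: truth_set_Iff)
    then have "truth_set W B V a = truth_set W B V b"
      using truth_set_subset[OF closed V, of a] truth_set_subset[OF closed V, of b] by blast
    then show "truth_set W B V (Iff (Box a) (Box b)) = W"
      by (simp add: truth_set_Iff)
  qed
qed

lemma valid_in_ax4: "\<forall>X\<subseteq>W. B X \<subseteq> B (B X) \<Longrightarrow> valid_in W B ax4"
  unfolding valid_in_def by (auto simp: ax4_def truth_set_Imp)

lemma valid_in_axT: "\<forall>X\<subseteq>W. B X \<subseteq> X \<Longrightarrow> valid_in W B axT"
  unfolding valid_in_def by (auto simp: axT_def truth_set_Imp)

lemma valid_in_axM:
  assumes "\<forall>X Y. X \<subseteq> Y \<longrightarrow> Y \<subseteq> W \<longrightarrow> B X \<subseteq> B Y"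
  shows "valid_in W B axM"
proof -
  have "B (X \<inter> Y) \<subseteq> B X \<inter> B Y" if "X \<subseteq> W" "Y \<subseteq> W" for X Y
    using assms that by (meson Int_lower1 Int_lower2 le_inf_iff)
  then show ?thesis
    unfolding valid_in_def by (auto simp: axM_def truth_set_Imp)
qed

lemma valid_in_axC:
  "\<forall>X Y. X \<subseteq> W \<longrightarrow> Y \<subseteq> W \<longrightarrow> B X \<inter> B Y \<subseteq> B (X \<inter> Y) \<Longrightarrow> valid_in W B axC"
  unfolding valid_in_def by (auto simp: axC_def truth_set_Imp)

lemma inj_on_vimage_image_Int: "inj_on h W \<Longrightarrow> T \<subseteq> W \<Longrightarrow> h -` h ` T \<inter> W = T"
  unfolding inj_on_def by blast

lemma truth_set_inj_image:
  assumes inj: "inj_on h W" and closed: "\<forall>X\<subseteq>W. B X \<subseteq> W" and V: "\<forall>p. V p \<subseteq> W"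
  shows "truth_set (h ` W) (\<lambda>X. h ` B (h -` X \<inter> W)) (\<lambda>p. h ` V p) a = h ` truth_set W B V a"
proof (induction a)
  case (Neg a)
  have "h ` (W - truth_set W B V a) = h ` W - h ` truth_set W B V a"
    using inj truth_set_subset[OF closed V] by (intro inj_on_image_set_diff) auto
  with Neg.IH show ?case by simp
next
  case (Conj a b)
  have "h ` (truth_set W B V a \<inter> truth_set W B V b) = h ` truth_set W B V a \<inter> h ` truth_set W B V b"
    using inj truth_set_subset[OF closed V] by (intro inj_on_image_Int) auto
  with Conj.IH show ?case by simp
next
  case (Box a)
  have "h -` h ` truth_set W B V a \<inter> W = truth_set W B V a"
    using inj truth_set_subset[OF closed V] by (rule inj_on_vimage_image_Int)
  with Box.IH show ?case by simp
qed simp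

lemma valid_in_inj_image:
  assumes inj: "inj_on h W" and closed: "\<forall>X\<subseteq>W. B X \<subseteq> W"
  shows "valid_in (h ` W) (\<lambda>X. h ` B (h -` X \<inter> W)) a \<longleftrightarrow> valid_in W B a"
proof
  assume valid_image: "valid_in (h ` W) (\<lambda>X. h ` B (h -` X \<inter> W)) a"
  show "valid_in W B a"
  proof (rule valid_inI)
    fix V :: "nat \<Rightarrow> 'a set" assume V: "\<forall>p. V p \<subseteq> W"
    have "\<forall>p. h ` V p \<subseteq> h ` W"
      using V by blast
    then have "truth_set (h ` W) (\<lambda>X. h ` B (h -` X \<inter> W)) (\<lambda>p. h ` V p) a = h ` W"
      by (rule valid_inD[OF valid_image])
    then have "h ` truth_set W B V a = h ` W"
      unfolding truth_set_inj_image[OF inj closed V] .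
    then show "truth_set W B V a = W"
      using inj_on_image_eq_iff[OF inj truth_set_subset[OF closed V] order_refl] by blast
  qed
next
  assume valid_a: "valid_in W B a"
  show "valid_in (h ` W) (\<lambda>X. h ` B (h -` X \<inter> W)) a"
  proof (rule valid_inI)
    fix V' :: "nat \<Rightarrow> 'b set" assume V': "\<forall>p. V' p \<subseteq> h ` W"
    define V where "V p = h -` V' p \<inter> W" for p
    have V: "\<forall>p. V p \<subseteq> W"
      by (simp add: V_def)
    have "V' p = h ` V p" for p
      using V' unfolding V_def by blast
    then have "V' = (\<lambda>p. h ` V p)"
      by (simp add: fun_eq_iff)
    then have "truth_set (h ` W) (\<lambda>X. h ` B (h -` X \<inter> W)) V' a = h ` truth_set W B V a"
      using truth_set_inj_image[OF inj closed V] by simp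
    also have "\<dots> = h ` W"
      using valid_inD[OF valid_a V] by simp
    finally show "truth_set (h ` W) (\<lambda>X. h ` B (h -` X \<inter> W)) V' a = h ` W" .
  qed
qed

lemma finite_frame_equivalent:
  fixes W :: "'a set"
  assumes "finite W" "W \<noteq> {}" and closed: "\<forall>X\<subseteq>W. B X \<subseteq> W"
  shows "\<exists>F. finite_frame F \<and> (\<forall>a. valid F a \<longleftrightarrow> valid_in W B a)"
proof -
  obtain h :: "'a \<Rightarrow> nat" where inj: "inj_on h W"
    using finite_imp_inj_to_nat_seg[OF \<open>finite W\<close>] by blast
  define F where "F = (h ` W, \<lambda>X. h ` B (h -` X \<inter> W))"
  have "B (h -` X \<inter> W) \<subseteq> W" for X
    using closed by blast
  then have "finite_frame F"
    using assms unfolding finite_frame_def is_frame_def F_def by (simp add: image_mono)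
  moreover have "valid F a \<longleftrightarrow> valid_in W B a" for a
    unfolding valid_iff_valid_in F_def fst_conv snd_conv by (rule valid_in_inj_image[OF inj closed])
  ultimately show ?thesis by blast
qed

definition finite_countermodel :: "fm set \<Rightarrow> fm \<Rightarrow> 'a set \<Rightarrow> ('a set \<Rightarrow> 'a set) \<Rightarrow> bool" where
  "finite_countermodel L a W B \<longleftrightarrow> finite W \<and> W \<noteq> {} \<and> (\<forall>X\<subseteq>W. B X \<subseteq> W)
                                 \<and> (\<forall>b\<in>L. valid_in W B b) \<and> \<not> valid_in W B a"

lemma has_fmpI:
  assumes "\<And>a. a \<notin> L \<Longrightarrow> \<exists>(W :: 'a set) B. finite_countermodel L a W B"
  shows "has_fmp L"
proof -
  define C where "C = {F. finite_frame F \<and> (\<forall>b\<in>L. valid F b)}"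
  have "a \<in> L" if valid_a: "\<forall>F\<in>C. valid F a" for a
  proof (rule ccontr)
    assume "a \<notin> L"
    from assms[OF this, unfolded finite_countermodel_def]
    obtain W :: "'a set" and B where W: "finite W" "W \<noteq> {}" "\<forall>X\<subseteq>W. B X \<subseteq> W"
      and "\<forall>b\<in>L. valid_in W B b" "\<not> valid_in W B a"
      by blast
    obtain F where F: "finite_frame F" "\<forall>a. valid F a \<longleftrightarrow> valid_in W B a"
      using finite_frame_equivalent[OF W] by blast
    with \<open>\<forall>b\<in>L. valid_in W B b\<close> have "F \<in> C"
      unfolding C_def by simp
    with valid_a have "valid F a"
      by blast
    with F(2) \<open>\<not> valid_in W B a\<close> show False
      by simp
  qed
  then have "\<forall>a. a \<in> L \<longleftrightarrow> (\<forall>F\<in>C. valid F a)"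
    unfolding C_def by blast
  moreover have "\<forall>F\<in>C. finite_frame F"
    unfolding C_def by blast
  ultimately show ?thesis
    unfolding has_fmp_def by blast
qed

fun subformulas :: "fm \<Rightarrow> fm set" where
  "subformulas (Var n) = {Var n}"
| "subformulas (Neg a) = insert (Neg a) (subformulas a)"
| "subformulas (Conj a b) = insert (Conj a b) (subformulas a \<union> subformulas b)"
| "subformulas (Box a) = insert (Box a) (subformulas a)"

fun atoms :: "fm \<Rightarrow> fm set" where
  "atoms (Var n) = {Var n}"
| "atoms (Neg a) = atoms a"
| "atoms (Conj a b) = atoms a \<union> atoms b"
| "atoms (Box a) = {Box a}"

lemma finite_subformulas: "finite (subformulas a)"
  by (induction a) auto

lemma finite_atoms: "finite (atoms a)"
  by (induction a) auto

lemma subformulas_refl: "a \<in> subformulas a"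
  by (cases a) auto

lemma subformulas_trans: "b \<in> subformulas a \<Longrightarrow> subformulas b \<subseteq> subformulas a"
  by (induction a) auto

lemma Box_mem_subformulas_arg: "Box d \<in> subformulas a \<Longrightarrow> d \<in> subformulas a"
  using subformulas_trans subformulas_refl by fastforce

lemma atoms_Imp [simp]: "atoms (Imp a b) = atoms a \<union> atoms b"
  by (simp add: Imp_def)

lemma atoms_Iff [simp]: "atoms (Iff a b) = atoms a \<union> atoms b"
  by (auto simp: Iff_def)

lemma peval_atom: "x \<in> atoms a \<Longrightarrow> peval v x = v x"
  by (induction a) auto

lemma peval_cong_atoms: "\<forall>x\<in>atoms a. v x = u x \<Longrightarrow> peval v a = peval u a"
  by (induction a) auto

lemma peval_Imp [simp]: "peval v (Imp a b) \<longleftrightarrow> (peval v a \<longrightarrow> peval v b)"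
  by (simp add: Imp_def)

lemma peval_Iff [simp]: "peval v (Iff a b) \<longleftrightarrow> (peval v a \<longleftrightarrow> peval v b)"
  by (auto simp: Iff_def)

definition Top :: fm where "Top = Neg (Conj (Var 0) (Neg (Var 0)))"

text \<open>The singleton equation keeps \<open>Top\<close>, and with it \<open>Var 0\<close>, out of the atoms of every
  nonempty conjunction.\<close>

fun conj_list :: "fm list \<Rightarrow> fm" where
  "conj_list [] = Top"
| "conj_list [x] = x"
| "conj_list (x # y # xs) = Conj x (conj_list (y # xs))"

lemma peval_conj_list [simp]: "peval v (conj_list xs) \<longleftrightarrow> (\<forall>x\<in>set xs. peval v x)"
  by (induction xs rule: conj_list.induct) (auto simp: Top_def)

lemma atoms_conj_list: "xs \<noteq> [] \<Longrightarrow> atoms (conj_list xs) = (\<Union>x\<in>set xs. atoms x)"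
  by (induction xs rule: conj_list.induct) auto

lemma peval_foldr_Imp [simp]:
  "peval v (foldr Imp ps a) \<longleftrightarrow> ((\<forall>p\<in>set ps. peval v p) \<longrightarrow> peval v a)"
  by (induction ps) auto

lemma logic_mp: "is_logic L \<Longrightarrow> a \<in> L \<Longrightarrow> Imp a b \<in> L \<Longrightarrow> b \<in> L"
  unfolding is_logic_def by blast

lemma logic_tautological_consequence:
  assumes L: "is_logic L" and "set ps \<subseteq> L" and "\<And>v. \<forall>p\<in>set ps. peval v p \<Longrightarrow> peval v a"
  shows "a \<in> L"
proof -
  have "peval v (foldr Imp ps a)" for v
    using assms(3) by simp
  then have "foldr Imp ps a \<in> L"
    using L unfolding is_logic_def tautology_def by blast
  with \<open>set ps \<subseteq> L\<close> show "a \<in> L"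
    by (induction ps) (auto intro: logic_mp[OF L])
qed

lemma logic_RE: "is_logic L \<Longrightarrow> Iff a b \<in> L \<Longrightarrow> Iff (Box a) (Box b) \<in> L"
  unfolding is_logic_def by blast

lemma logic_subst: "is_logic L \<Longrightarrow> a \<in> L \<Longrightarrow> subst s a \<in> L"
  unfolding is_logic_def by blast

lemma ax4_instance: "is_logic L \<Longrightarrow> ax4 \<in> L \<Longrightarrow> Imp (Box a) (Box (Box a)) \<in> L"
  using logic_subst[of L ax4 "\<lambda>_. a"] by (simp add: ax4_def Imp_def)

lemma axT_instance: "is_logic L \<Longrightarrow> axT \<in> L \<Longrightarrow> Imp (Box a) a \<in> L"
  using logic_subst[of L axT "\<lambda>_. a"] by (simp add: axT_def Imp_def)

lemma axM_instance:
  "is_logic L \<Longrightarrow> axM \<in> L \<Longrightarrow> Imp (Box (Conj a b)) (Conj (Box a) (Box b)) \<in> L"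
  using logic_subst[of L axM "\<lambda>n. if n = 0 then a else b"] by (simp add: axM_def Imp_def)

lemma axC_instance:
  "is_logic L \<Longrightarrow> axC \<in> L \<Longrightarrow> Imp (Conj (Box a) (Box b)) (Box (Conj a b)) \<in> L"
  using logic_subst[of L axC "\<lambda>n. if n = 0 then a else b"] by (simp add: axC_def Imp_def)

lemma logic_RM:
  assumes L: "is_logic L" and "axM \<in> L" and "Imp a b \<in> L"
  shows "Imp (Box a) (Box b) \<in> L"
proof -
  have "Iff a (Conj a b) \<in> L"
    by (rule logic_tautological_consequence[OF L, of "[Imp a b]"]) (use assms in auto)
  then have "Iff (Box a) (Box (Conj a b)) \<in> L"
    by (rule logic_RE[OF L])
  then show ?thesis
    using axM_instance[OF L \<open>axM \<in> L\<close>, of a b]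
    by (intro logic_tautological_consequence[OF L,
          of "[Iff (Box a) (Box (Conj a b)), Imp (Box (Conj a b)) (Conj (Box a) (Box b))]"]) auto
qed

lemma Box_conj_list_Iff:
  assumes L: "is_logic L" and M: "axM \<in> L" and C: "axC \<in> L" and "ds \<noteq> []"
  shows "Iff (Box (conj_list ds)) (conj_list (map Box ds)) \<in> L"
  using \<open>ds \<noteq> []\<close>
proof (induction ds rule: conj_list.induct)
  case (2 d)
  show ?case by (rule logic_tautological_consequence[OF L, of "[]"]) auto
next
  case (3 d e ds)
  let ?m = "conj_list (e # ds)"
  have "Iff (Box ?m) (conj_list (map Box (e # ds))) \<in> L"
    using "3.IH" by simp
  then show ?case
    using axM_instance[OF L M, of d ?m] axC_instance[OF L C, of d ?m]
    by (intro logic_tautological_consequence[OF L, of "[Iff (Box ?m) (conj_list (map Box (e # ds))),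
          Imp (Box (Conj d ?m)) (Conj (Box d) (Box ?m)), Imp (Conj (Box d) (Box ?m)) (Box (Conj d ?m))]"])
       auto
qed simp

lemma is_logic_lplus: "is_logic (lplus L G)"
  unfolding lplus_def is_logic_def by (intro conjI allI impI; blast)

lemma lplus_least: "is_logic X \<Longrightarrow> L \<union> G \<subseteq> X \<Longrightarrow> lplus L G \<subseteq> X"
  unfolding lplus_def by blast

lemma lplus_upper: "L \<union> G \<subseteq> lplus L G"
  unfolding lplus_def by blast

lemma E4_subset: "is_logic X \<Longrightarrow> ax4 \<in> X \<Longrightarrow> E4 \<subseteq> X"
  unfolding E4_def E_def by (intro lplus_least) (auto dest: lplus_least[of X "{}" "{}"])

lemma S04_subset: "is_logic X \<Longrightarrow> ax4 \<in> X \<Longrightarrow> axT \<in> X \<Longrightarrow> axM \<in> X \<Longrightarrow> S04 \<subseteq> X"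
  unfolding S04_def by (intro lplus_least) (auto dest: E4_subset)

lemma EMC4_subset: "is_logic X \<Longrightarrow> ax4 \<in> X \<Longrightarrow> axC \<in> X \<Longrightarrow> axM \<in> X \<Longrightarrow> EMC4 \<subseteq> X"
  unfolding EMC4_def by (intro lplus_least) (auto dest: E4_subset)

lemma ax4_mem_E4: "ax4 \<in> E4"
  using lplus_upper unfolding E4_def by blast

lemma axioms_mem_S04: "ax4 \<in> S04" "axT \<in> S04" "axM \<in> S04"
  using lplus_upper ax4_mem_E4 unfolding S04_def by blast+

lemma axioms_mem_EMC4: "ax4 \<in> EMC4" "axC \<in> EMC4" "axM \<in> EMC4"
  using lplus_upper ax4_mem_E4 unfolding EMC4_def by blast+

section \<open>The finite canonical model of a non-theorem\<close>

locale finite_canonical_model =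
  fixes L :: "fm set" and a0 :: fm
  assumes logic_L: "is_logic L"
begin

definition At :: "fm set" where "At = (\<Union>b\<in>subformulas a0. atoms b)"

lemma finite_At: "finite At"
  unfolding At_def using finite_subformulas finite_atoms by blast

lemma atoms_subset_At: "b \<in> subformulas a0 \<Longrightarrow> atoms b \<subseteq> At"
  unfolding At_def by blast

lemma atoms_arg_subset_At: "Box d \<in> subformulas a0 \<Longrightarrow> atoms d \<subseteq> At"
  using atoms_subset_At Box_mem_subformulas_arg by blast

definition char_fm :: "fm set \<Rightarrow> fm" where
  "char_fm S = conj_list (map (\<lambda>x. if x \<in> S then x else Neg x) (SOME xs. set xs = At))"

lemma peval_char_fm: "peval v (char_fm S) \<longleftrightarrow> (\<forall>x\<in>At. v x \<longleftrightarrow> x \<in> S)"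
proof -
  have "set (SOME xs. set xs = At) = At"
    using finite_list[OF finite_At] by (rule someI_ex)
  then have "peval v (char_fm S) \<longleftrightarrow> (\<forall>x\<in>At. peval v (if x \<in> S then x else Neg x))"
    unfolding char_fm_def peval_conj_list set_map by blast
  moreover have "peval v x = v x" if "x \<in> At" for x
    using that peval_atom unfolding At_def by blast
  ultimately show ?thesis
    by auto
qed

lemma peval_eq_if_char_fm:
  "atoms \<phi> \<subseteq> At \<Longrightarrow> peval v (char_fm S) \<Longrightarrow> peval v \<phi> = peval (\<lambda>x. x \<in> S) \<phi>"
  by (intro peval_cong_atoms) (auto simp: peval_char_fm)

definition worlds :: "fm set set" where
  "worlds = {S. S \<subseteq> At \<and> Neg (char_fm S) \<notin> L}"

lemma finite_worlds: "finite worlds"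
  using finite_At by (rule rev_finite_subset[OF finite_Pow_iff[THEN iffD2]]) (auto simp: worlds_def)

definition ext :: "fm \<Rightarrow> fm set set" where
  "ext \<phi> = {S \<in> worlds. peval (\<lambda>x. x \<in> S) \<phi>}"

lemma ext_subset_worlds: "ext \<phi> \<subseteq> worlds"
  unfolding ext_def by blast

lemma mem_L_iff_ext_eq_worlds:
  assumes "atoms \<phi> \<subseteq> At"
  shows "\<phi> \<in> L \<longleftrightarrow> ext \<phi> = worlds"
proof
  assume "\<phi> \<in> L"
  have "peval (\<lambda>x. x \<in> S) \<phi>" if "S \<in> worlds" for S
  proof (rule ccontr)
    assume "\<not> peval (\<lambda>x. x \<in> S) \<phi>"
    then have "Neg (char_fm S) \<in> L"
      using \<open>\<phi> \<in> L\<close> peval_eq_if_char_fm[OF assms]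
      by (intro logic_tautological_consequence[OF logic_L, of "[\<phi>]"]) auto
    with \<open>S \<in> worlds\<close> show False
      unfolding worlds_def by blast
  qed
  then show "ext \<phi> = worlds"
    unfolding ext_def by blast
next
  \<comment> \<open>\<open>\<phi>\<close> follows tautologically from the negated characteristic formulas of the sets of
      atoms refuting it.\<close>
  assume ext_\<phi>: "ext \<phi> = worlds"
  define refuting where "refuting = {S. S \<subseteq> At \<and> \<not> peval (\<lambda>x. x \<in> S) \<phi>}"
  have "finite refuting"
    using finite_At by (rule rev_finite_subset[OF finite_Pow_iff[THEN iffD2]]) (auto simp: refuting_def)
  then obtain rs where rs: "set rs = refuting"
    using finite_list by blast
  show "\<phi> \<in> L"
  proof (rule logic_tautological_consequence[OF logic_L, of "map (\<lambda>S. Neg (char_fm S)) rs"])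
    show "set (map (\<lambda>S. Neg (char_fm S)) rs) \<subseteq> L"
      using rs ext_\<phi> unfolding refuting_def worlds_def ext_def by auto
  next
    fix v assume v: "\<forall>p\<in>set (map (\<lambda>S. Neg (char_fm S)) rs). peval v p"
    have char_v: "peval v (char_fm {x \<in> At. v x})"
      by (simp add: peval_char_fm)
    with v rs have "{x \<in> At. v x} \<notin> refuting"
      by auto
    then show "peval v \<phi>"
      using peval_eq_if_char_fm[OF assms char_v] refuting_def by auto
  qed
qed

lemma Imp_mem_L_iff:
  "atoms \<phi> \<subseteq> At \<Longrightarrow> atoms \<psi> \<subseteq> At \<Longrightarrow> Imp \<phi> \<psi> \<in> L \<longleftrightarrow> ext \<phi> \<subseteq> ext \<psi>"
  by (subst mem_L_iff_ext_eq_worlds) (auto simp: ext_def)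

lemma Iff_mem_L_iff:
  "atoms \<phi> \<subseteq> At \<Longrightarrow> atoms \<psi> \<subseteq> At \<Longrightarrow> Iff \<phi> \<psi> \<in> L \<longleftrightarrow> ext \<phi> = ext \<psi>"
  by (subst mem_L_iff_ext_eq_worlds) (auto simp: ext_def)

lemma ext_Box_cong:
  assumes "Box d \<in> subformulas a0" "Box e \<in> subformulas a0" "ext d = ext e"
  shows "ext (Box d) = ext (Box e)"
proof -
  have "Iff d e \<in> L"
    using assms(3) Iff_mem_L_iff[OF atoms_arg_subset_At[OF assms(1)] atoms_arg_subset_At[OF assms(2)]]
    by blast
  then have "Iff (Box d) (Box e) \<in> L"
    by (rule logic_RE[OF logic_L])
  then show ?thesis
    using Iff_mem_L_iff[OF atoms_subset_At[OF assms(1)] atoms_subset_At[OF assms(2)]] by blast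
qed

definition canonical_val :: "nat \<Rightarrow> fm set set" where
  "canonical_val p = {S \<in> worlds. Var p \<in> S}"

lemma truth_set_canonical_val:
  assumes "\<And>d. Box d \<in> subformulas a0 \<Longrightarrow> B (ext d) = ext (Box d)"
  shows "b \<in> subformulas a0 \<Longrightarrow> truth_set worlds B canonical_val b = ext b"
proof (induction b)
  case (Var p)
  then show ?case by (simp add: canonical_val_def ext_def)
next
  case (Neg b)
  then have "b \<in> subformulas a0" using subformulas_trans subformulas_refl by fastforce
  with Neg.IH show ?case by (auto simp: ext_def)
next
  case (Conj b c)
  then have "b \<in> subformulas a0" "c \<in> subformulas a0" using subformulas_trans subformulas_refl by fastforce+
  with Conj.IH show ?case by (auto simp: ext_def)
next
  case (Box b)
  with assms Box_mem_subformulas_arg show ?case by simp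
qed

lemma countermodel:
  assumes "a0 \<notin> L"
    and B_ext: "\<And>d. Box d \<in> subformulas a0 \<Longrightarrow> B (ext d) = ext (Box d)"
    and closed: "\<And>X. X \<subseteq> worlds \<Longrightarrow> B X \<subseteq> worlds"
    and sound: "L \<subseteq> {b. valid_in worlds B b}"
  shows "finite_countermodel L a0 worlds B"
proof -
  have "ext a0 \<noteq> worlds"
    using assms(1) mem_L_iff_ext_eq_worlds[OF atoms_subset_At[OF subformulas_refl]] by blast
  moreover have "truth_set worlds B canonical_val a0 = ext a0"
    using truth_set_canonical_val[OF B_ext subformulas_refl] .
  moreover have "truth_set worlds B canonical_val a0 = worlds" if "valid_in worlds B a0"
    using valid_inD[OF that] by (simp add: canonical_val_def)
  ultimately have "\<not> valid_in worlds B a0" "worlds \<noteq> {}"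
    using ext_subset_worlds by auto
  moreover have "\<forall>X\<subseteq>worlds. B X \<subseteq> worlds" "\<forall>b\<in>L. valid_in worlds B b"
    using closed sound by auto
  ultimately show ?thesis
    using finite_worlds unfolding finite_countermodel_def by blast
qed

subsection \<open>Neighborhood functions for the three logics\<close>

definition box_E4 :: "fm set set \<Rightarrow> fm set set" where
  "box_E4 X = (if X \<in> ext ` {d. Box d \<in> subformulas a0}
               then (\<Union>d\<in>{d. Box d \<in> subformulas a0 \<and> ext d = X}. ext (Box d)) else X)"

lemma box_E4_ext:
  assumes d: "Box d \<in> subformulas a0"
  shows "box_E4 (ext d) = ext (Box d)"
proof -
  have "ext (Box e) = ext (Box d)" if "Box e \<in> subformulas a0" "ext e = ext d" for e
    using ext_Box_cong[OF that(1) d that(2)] .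
  then have "(\<Union>e\<in>{e. Box e \<in> subformulas a0 \<and> ext e = ext d}. ext (Box e)) = ext (Box d)"
    using d by blast
  moreover have "ext d \<in> ext ` {e. Box e \<in> subformulas a0}"
    using d by blast
  ultimately show ?thesis
    unfolding box_E4_def by simp
qed

lemma box_E4_subset_worlds: "X \<subseteq> worlds \<Longrightarrow> box_E4 X \<subseteq> worlds"
  unfolding box_E4_def using ext_subset_worlds by auto

lemma box_E4_trans:
  assumes "ax4 \<in> L"
  shows "box_E4 X \<subseteq> box_E4 (box_E4 X)"
proof (cases "X \<in> ext ` {d. Box d \<in> subformulas a0}")
  case True
  then obtain d where d: "Box d \<in> subformulas a0" "X = ext d" by blast
  show ?thesis
  proof (cases "ext (Box d) \<in> ext ` {e. Box e \<in> subformulas a0}")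
    case True
    then obtain e where e: "Box e \<in> subformulas a0" "ext (Box d) = ext e" by blast
    then have "Iff (Box d) e \<in> L"
      using Iff_mem_L_iff[OF atoms_subset_At[OF d(1)] atoms_arg_subset_At[OF e(1)]] by blast
    then have "Iff (Box (Box d)) (Box e) \<in> L"
      by (rule logic_RE[OF logic_L])
    then have "Imp (Box d) (Box e) \<in> L"
      using ax4_instance[OF logic_L assms, of d]
      by (intro logic_tautological_consequence[OF logic_L,
            of "[Iff (Box (Box d)) (Box e), Imp (Box d) (Box (Box d))]"]) auto
    then have "ext (Box d) \<subseteq> ext (Box e)"
      using Imp_mem_L_iff[OF atoms_subset_At[OF d(1)] atoms_subset_At[OF e(1)]] by blast
    then show ?thesis
      using d e box_E4_ext by simp
  next
    case False
    then show ?thesis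
      using d box_E4_ext by (simp add: box_E4_def)
  qed
next
  case False
  then show ?thesis by (simp add: box_E4_def)
qed

definition box_S04 :: "fm set set \<Rightarrow> fm set set" where
  "box_S04 X = (\<Union>d\<in>{d. Box d \<in> subformulas a0 \<and> ext (Box d) \<subseteq> X}. ext (Box d))"

lemma box_S04_subset_worlds: "box_S04 X \<subseteq> worlds"
  unfolding box_S04_def using ext_subset_worlds by blast

lemma box_S04_deflationary: "box_S04 X \<subseteq> X"
  unfolding box_S04_def by blast

lemma box_S04_mono: "X \<subseteq> Y \<Longrightarrow> box_S04 X \<subseteq> box_S04 Y"
  unfolding box_S04_def by blast

lemma box_S04_trans: "box_S04 X \<subseteq> box_S04 (box_S04 X)"
  unfolding box_S04_def by blast

lemma box_S04_ext:
  assumes "ax4 \<in> L" "axT \<in> L" "axM \<in> L" and d: "Box d \<in> subformulas a0"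
  shows "box_S04 (ext d) = ext (Box d)"
proof
  have "ext (Box e) \<subseteq> ext (Box d)" if e: "Box e \<in> subformulas a0" "ext (Box e) \<subseteq> ext d" for e
  proof -
    have "Imp (Box e) d \<in> L"
      using e(2) Imp_mem_L_iff[OF atoms_subset_At[OF e(1)] atoms_arg_subset_At[OF d]] by blast
    then have "Imp (Box (Box e)) (Box d) \<in> L"
      by (rule logic_RM[OF logic_L \<open>axM \<in> L\<close>])
    then have "Imp (Box e) (Box d) \<in> L"
      using ax4_instance[OF logic_L \<open>ax4 \<in> L\<close>, of e]
      by (intro logic_tautological_consequence[OF logic_L,
            of "[Imp (Box (Box e)) (Box d), Imp (Box e) (Box (Box e))]"]) auto
    then show ?thesis
      using Imp_mem_L_iff[OF atoms_subset_At[OF e(1)] atoms_subset_At[OF d]] by blast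
  qed
  then show "box_S04 (ext d) \<subseteq> ext (Box d)"
    unfolding box_S04_def by blast
next
  have "ext (Box d) \<subseteq> ext d"
    using axT_instance[OF logic_L \<open>axT \<in> L\<close>, of d]
      Imp_mem_L_iff[OF atoms_subset_At[OF d] atoms_arg_subset_At[OF d]] by blast
  with d show "ext (Box d) \<subseteq> box_S04 (ext d)"
    unfolding box_S04_def by blast
qed

text \<open>For EMC4 the neighborhoods are closed under intersection, so they are generated by
  conjunctions of boxes; the conjuncts \<open>d \<and> \<box>d\<close> stand in for reflexivity, which is not
  available without T.\<close>

definition box_EMC4 :: "fm set set \<Rightarrow> fm set set" where
  "box_EMC4 X = (\<Union>ds\<in>{ds. ds \<noteq> [] \<and> (\<forall>d\<in>set ds. Box d \<in> subformulas a0)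
                          \<and> ext (conj_list (map (\<lambda>d. Conj d (Box d)) ds)) \<subseteq> X}.
                  ext (conj_list (map Box ds)))"

lemma box_EMC4I:
  "ds \<noteq> [] \<Longrightarrow> \<forall>d\<in>set ds. Box d \<in> subformulas a0 \<Longrightarrow>
   ext (conj_list (map (\<lambda>d. Conj d (Box d)) ds)) \<subseteq> X \<Longrightarrow>
   S \<in> ext (conj_list (map Box ds)) \<Longrightarrow> S \<in> box_EMC4 X"
  unfolding box_EMC4_def by blast

lemma box_EMC4E:
  assumes "S \<in> box_EMC4 X"
  obtains ds where "ds \<noteq> []" "\<forall>d\<in>set ds. Box d \<in> subformulas a0"
    "ext (conj_list (map (\<lambda>d. Conj d (Box d)) ds)) \<subseteq> X" "S \<in> ext (conj_list (map Box ds))"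
  using assms unfolding box_EMC4_def by blast

lemma ext_conj_list: "ext (conj_list xs) = (\<Inter>x\<in>set xs. ext x) \<inter> worlds"
  unfolding ext_def by auto

lemma box_EMC4_subset_worlds: "box_EMC4 X \<subseteq> worlds"
  unfolding box_EMC4_def using ext_subset_worlds by blast

lemma box_EMC4_mono: "X \<subseteq> Y \<Longrightarrow> box_EMC4 X \<subseteq> box_EMC4 Y"
  unfolding box_EMC4_def by blast

lemma box_EMC4_Int: "box_EMC4 X \<inter> box_EMC4 Y \<subseteq> box_EMC4 (X \<inter> Y)"
proof
  fix S assume "S \<in> box_EMC4 X \<inter> box_EMC4 Y"
  then have "S \<in> box_EMC4 X" "S \<in> box_EMC4 Y"
    by blast+
  obtain ds where
    ds: "ds \<noteq> []" "\<forall>d\<in>set ds. Box d \<in> subformulas a0"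
      "ext (conj_list (map (\<lambda>d. Conj d (Box d)) ds)) \<subseteq> X" "S \<in> ext (conj_list (map Box ds))"
    using \<open>S \<in> box_EMC4 X\<close> by (rule box_EMC4E)
  obtain es where
    es: "es \<noteq> []" "\<forall>d\<in>set es. Box d \<in> subformulas a0"
      "ext (conj_list (map (\<lambda>d. Conj d (Box d)) es)) \<subseteq> Y" "S \<in> ext (conj_list (map Box es))"
    using \<open>S \<in> box_EMC4 Y\<close> by (rule box_EMC4E)
  have "ext (conj_list (map (\<lambda>d. Conj d (Box d)) (ds @ es))) \<subseteq> X \<inter> Y"
    using ds(3) es(3) unfolding ext_conj_list by auto
  moreover have "S \<in> ext (conj_list (map Box (ds @ es)))"
    using ds(4) es(4) unfolding ext_conj_list by auto
  ultimately show "S \<in> box_EMC4 (X \<inter> Y)"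
    using ds(1,2) es(2) by (intro box_EMC4I[of "ds @ es"]) auto
qed

lemma box_EMC4_trans: "box_EMC4 X \<subseteq> box_EMC4 (box_EMC4 X)"
proof
  fix S assume "S \<in> box_EMC4 X"
  then obtain ds where
    ds: "ds \<noteq> []" "\<forall>d\<in>set ds. Box d \<in> subformulas a0"
      "ext (conj_list (map (\<lambda>d. Conj d (Box d)) ds)) \<subseteq> X" "S \<in> ext (conj_list (map Box ds))"
    by (rule box_EMC4E)
  have "ext (conj_list (map (\<lambda>d. Conj d (Box d)) ds)) \<subseteq> ext (conj_list (map Box ds))"
    unfolding ext_conj_list ext_def by auto
  also have "\<dots> \<subseteq> box_EMC4 X"
    using box_EMC4I[OF ds(1-3)] by blast
  finally show "S \<in> box_EMC4 (box_EMC4 X)"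
    by (rule box_EMC4I[OF ds(1,2) _ ds(4)])
qed

lemma ext_conj_list_Box_subset:
  assumes "ax4 \<in> L" "axC \<in> L" "axM \<in> L" and d0: "Box d0 \<in> subformulas a0"
    and ds: "ds \<noteq> []" "\<forall>d\<in>set ds. Box d \<in> subformulas a0"
      "ext (conj_list (map (\<lambda>d. Conj d (Box d)) ds)) \<subseteq> ext d0"
  shows "ext (conj_list (map Box ds)) \<subseteq> ext (Box d0)"
proof -
  let ?m = "conj_list ds" and ?bs = "conj_list (map Box ds)"
    and ?ms = "conj_list (map (\<lambda>d. Conj d (Box d)) ds)"
  have atoms_ms: "atoms ?ms \<subseteq> At" and atoms_bs: "atoms ?bs \<subseteq> At"
    using ds(1,2) atoms_subset_At Box_mem_subformulas_arg by (force simp: atoms_conj_list)+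
  have "Imp ?ms d0 \<in> L"
    using ds(3) Imp_mem_L_iff[OF atoms_ms atoms_arg_subset_At[OF d0]] by blast
  moreover have Box_m: "Iff (Box ?m) ?bs \<in> L"
    using Box_conj_list_Iff[OF logic_L \<open>axM \<in> L\<close> \<open>axC \<in> L\<close> ds(1)] .
  ultimately have "Imp (Conj ?m (Box ?m)) d0 \<in> L"
    by (intro logic_tautological_consequence[OF logic_L, of "[Imp ?ms d0, Iff (Box ?m) ?bs]"]) auto
  then have "Imp (Box (Conj ?m (Box ?m))) (Box d0) \<in> L"
    by (rule logic_RM[OF logic_L \<open>axM \<in> L\<close>])
  \<comment> \<open>\<open>\<box>m \<rightarrow> \<box>m \<and> \<box>\<box>m \<rightarrow> \<box>(m \<and> \<box>m) \<rightarrow> \<box>d0\<close> by 4 and C\<close>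
  then have "Imp ?bs (Box d0) \<in> L"
    using Box_m ax4_instance[OF logic_L \<open>ax4 \<in> L\<close>, of ?m] axC_instance[OF logic_L \<open>axC \<in> L\<close>, of ?m "Box ?m"]
    by (intro logic_tautological_consequence[OF logic_L, of "[Iff (Box ?m) ?bs,
          Imp (Box ?m) (Box (Box ?m)), Imp (Conj (Box ?m) (Box (Box ?m))) (Box (Conj ?m (Box ?m))),
          Imp (Box (Conj ?m (Box ?m))) (Box d0)]"]) auto
  then show ?thesis
    using Imp_mem_L_iff[OF atoms_bs atoms_subset_At[OF d0]] by blast
qed

lemma box_EMC4_ext:
  assumes "ax4 \<in> L" "axC \<in> L" "axM \<in> L" and d0: "Box d0 \<in> subformulas a0"
  shows "box_EMC4 (ext d0) = ext (Box d0)"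
proof
  show "box_EMC4 (ext d0) \<subseteq> ext (Box d0)"
  proof
    fix S assume "S \<in> box_EMC4 (ext d0)"
    then show "S \<in> ext (Box d0)"
      by (rule box_EMC4E) (use ext_conj_list_Box_subset[OF assms] in blast)
  qed
next
  have "ext (conj_list (map (\<lambda>d. Conj d (Box d)) [d0])) \<subseteq> ext d0"
    by (auto simp: ext_def)
  with d0 show "ext (Box d0) \<subseteq> box_EMC4 (ext d0)"
    using box_EMC4I[of "[d0]"] by auto
qed

end

lemma has_fmp_E4: "has_fmp E4"
proof (rule has_fmpI)
  fix a assume "a \<notin> E4"
  interpret finite_canonical_model E4 a
    by unfold_locales (simp add: E4_def is_logic_lplus)
  have "finite_countermodel E4 a worlds box_E4"
    using \<open>a \<notin> E4\<close> box_E4_ext box_E4_subset_worlds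
  proof (rule countermodel)
    show "E4 \<subseteq> {b. valid_in worlds box_E4 b}"
      by (intro E4_subset is_logic_valid_in)
        (simp_all add: box_E4_subset_worlds valid_in_ax4 box_E4_trans[OF ax4_mem_E4])
  qed
  then show "\<exists>(W :: fm set set) B. finite_countermodel E4 a W B"
    by blast
qed

lemma has_fmp_S04: "has_fmp S04"
proof (rule has_fmpI)
  fix a assume "a \<notin> S04"
  interpret finite_canonical_model S04 a
    by unfold_locales (simp add: S04_def is_logic_lplus)
  have "finite_countermodel S04 a worlds box_S04"
    using \<open>a \<notin> S04\<close> box_S04_ext[OF axioms_mem_S04] box_S04_subset_worlds
  proof (rule countermodel)
    show "S04 \<subseteq> {b. valid_in worlds box_S04 b}"
      by (intro S04_subset is_logic_valid_in)
        (simp_all add: box_S04_subset_worlds valid_in_ax4 valid_in_axT valid_in_axM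
          box_S04_trans box_S04_deflationary box_S04_mono)
  qed
  then show "\<exists>(W :: fm set set) B. finite_countermodel S04 a W B"
    by blast
qed

lemma has_fmp_EMC4: "has_fmp EMC4"
proof (rule has_fmpI)
  fix a assume "a \<notin> EMC4"
  interpret finite_canonical_model EMC4 a
    by unfold_locales (simp add: EMC4_def is_logic_lplus)
  have "finite_countermodel EMC4 a worlds box_EMC4"
    using \<open>a \<notin> EMC4\<close> box_EMC4_ext[OF axioms_mem_EMC4] box_EMC4_subset_worlds
  proof (rule countermodel)
    show "EMC4 \<subseteq> {b. valid_in worlds box_EMC4 b}"
      by (intro EMC4_subset is_logic_valid_in)
        (simp_all add: box_EMC4_subset_worlds valid_in_ax4 valid_in_axC valid_in_axM
          box_EMC4_trans box_EMC4_Int box_EMC4_mono)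
  qed
  then show "\<exists>(W :: fm set set) B. finite_countermodel EMC4 a W B"
    by blast
qed

theorem mainTheorem2:
  shows "has_fmp E4 \<and> has_fmp S04 \<and> has_fmp EMC4"
  using has_fmp_E4 has_fmp_S04 has_fmp_EMC4 by blast

end
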